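(* Let $(\mathcal V,\mathcal W,\lambda)$ be a FTvN system with center $C$. Then: (a) For every $x\in\mathcal V$, $C(x)$ is a closed convex cone, and $[x]\cap C(x)=\{x\}$. (b) If $\lambda(x)=-\lambda(y)$ for some $x,y\in\mathcal V$, then $x=-y$ and $x,y\in C$. (c) $C$ is a closed linear subspace of $\mathcal V$ and $\lambda$ is linear on $C$. (d) $C=\{x\in\mathcal V:\lambda(-x)=-\lambda(x)\}$. (e) If $x$ and $-x$ commute, then $x\in C$. Consequently $C=\{x\in\mathcal V: x \text{ and } -x \text{ commute}\}$.
   Context: A Fan-Theobald-von Neumann (FTvN) system is a triple $(\mathcal V,\mathcal W,\lambda)$ where $\mathcal V,\mathcal W$ are real inner product spaces and $\lambda:\mathcal V\to\mathcal W$ is a map such that: (A1) $\|\lambda(x)\|=\|x\|$ for all $x$; (A2) $\langle x,y\rangle\le\langle\lambda(x),\lambda(y)\rangle$ for all $x,y$; (A3) for every $c\in\mathcal V$ and $q\in\lambda(\mathcal V)$ there exists $x$ with $\lambda(x)=q$ and $\langle c,x\rangle=\langle\lambda(c),\lambda(x)\rangle$. The $\lambda$-orbit of $u$ is $[u]=\{x:\lambda(x)=\lambda(u)\}$. Elements $x,y$ commute if $\langle x,y\rangle=\langle\lambda(x),\lambda(y)\rangle$. For $x\in\mathcal V$, $C(x)=\{y\in\mathcal V: y \text{ commutes with } x\}$, and the center of the system is $C=\bigcap_{x\in\mathcal V}C(x)$. *)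

theory Defs
  imports "HOL-Analysis.Analysis"
begin

definition ftvn :: "('v::real_inner \<Rightarrow> 'w::real_inner) \<Rightarrow> bool" where
  "ftvn lam \<longleftrightarrow>
     (\<forall>x. norm (lam x) = norm x) \<and>
     (\<forall>x y. inner x y \<le> inner (lam x) (lam y)) \<and>
     (\<forall>c q. q \<in> range lam \<longrightarrow> (\<exists>x. lam x = q \<and> inner c x = inner (lam c) (lam x)))"

definition orbit :: "('v::real_inner \<Rightarrow> 'w::real_inner) \<Rightarrow> 'v \<Rightarrow> 'v set" where
  "orbit lam u = {x. lam x = lam u}"

definition commute :: "('v::real_inner \<Rightarrow> 'w::real_inner) \<Rightarrow> 'v \<Rightarrow> 'v \<Rightarrow> bool" where
  "commute lam x y \<longleftrightarrow> inner x y = inner (lam x) (lam y)"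

definition commutant :: "('v::real_inner \<Rightarrow> 'w::real_inner) \<Rightarrow> 'v \<Rightarrow> 'v set" where
  "commutant lam x = {y. commute lam y x}"

definition center :: "('v::real_inner \<Rightarrow> 'w::real_inner) \<Rightarrow> 'v set" where
  "center lam = (\<Inter>x. commutant lam x)"

end

theory Submission
  imports Defs
begin

text \<open>Two vectors \<open>a\<close>, \<open>b\<close> of equal norm with \<open>norm a * norm b \<le> \<langle>a, b\<rangle>\<close> coincide
  (equality in Cauchy-Schwarz). Combined with (A1) and (A2) this rigidity gives positive
  homogeneity of \<open>lam\<close>, \<open>[x] \<inter> C(x) = {x}\<close>, and \<open>x = - y\<close> whenever \<open>lam x = - lam y\<close>;
  applying (A2) to \<open>x\<close> and to \<open>- x\<close> then squeezes \<open>\<langle>x, z\<rangle> = \<langle>lam x, lam z\<rangle>\<close> for every \<open>z\<close>.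
  (A3) is needed only for additivity of \<open>C(x)\<close>: realising \<open>lam x\<close> by an element of \<open>[x]\<close>
  that commutes with \<open>y + z\<close> bounds \<open>\<langle>lam (y + z), lam x\<rangle>\<close> by \<open>\<langle>y + z, x\<rangle>\<close>.
  On the centre \<open>lam\<close> preserves every inner product in the expansion of
  \<open>norm (lam (a x + b y) - (a lam x + b lam y))\<close>, which thus equals
  \<open>norm ((a x + b y) - (a x + b y)) = 0\<close>; so \<open>lam\<close> is linear there, and the subspace property follows from the characterisation (d).\<close>

lemma eq_if_norm_eq_inner_ge:
  fixes a b :: "'a::real_inner"
  assumes "norm a = norm b" and "norm a * norm b \<le> inner a b"
  shows "a = b"
proof -
  have "inner (a - b) (a - b) = (norm a)\<^sup>2 + (norm b)\<^sup>2 - 2 * inner a b"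
    by (simp add: inner_diff power2_norm_eq_inner inner_commute[of b a])
  also have "\<dots> \<le> 0"
    using assms by (simp add: power2_eq_square)
  finally show ?thesis
    using inner_ge_zero[of "a - b"] by simp
qed

lemma mem_center_iff: "x \<in> center lam \<longleftrightarrow> (\<forall>z. commute lam x z)"
  unfolding center_def commutant_def by blast

locale ftvn_system =
  fixes lam :: "'v::real_inner \<Rightarrow> 'w::real_inner"
  assumes ftvn: "ftvn lam"
begin

lemma norm_lam [simp]: "norm (lam x) = norm x"
  using ftvn unfolding ftvn_def by blast

lemma inner_lam_self [simp]: "inner (lam x) (lam x) = inner x x"
  by (metis norm_lam power2_norm_eq_inner)

lemma inner_le_inner_lam: "inner x y \<le> inner (lam x) (lam y)"
  using ftvn unfolding ftvn_def by blast

lemma exists_orbit_commute: "\<exists>x'. lam x' = lam x \<and> commute lam c x'"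
  using ftvn unfolding ftvn_def commute_def by blast

lemma dist_lam_le: "dist (lam x) (lam y) \<le> dist x y"
proof -
  have "(norm (lam x - lam y))\<^sup>2 \<le> (norm (x - y))\<^sup>2"
    using inner_le_inner_lam[of x y]
    by (simp add: power2_norm_eq_inner inner_diff inner_commute)
  then show ?thesis
    unfolding dist_norm by (rule power2_le_imp_le) simp
qed

lemma continuous_on_lam: "continuous_on UNIV lam"
proof -
  have "1-lipschitz_on UNIV lam"
    by (rule lipschitz_onI) (simp_all add: dist_lam_le)
  then show ?thesis
    by (rule lipschitz_on_continuous_on)
qed

lemma lam_scaleR_nonneg:
  assumes "c \<ge> 0"
  shows "lam (c *\<^sub>R x) = c *\<^sub>R lam x"
proof (rule eq_if_norm_eq_inner_ge)
  show "norm (lam (c *\<^sub>R x)) = norm (c *\<^sub>R lam x)"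
    using assms by simp
  have "c * inner (c *\<^sub>R x) x \<le> c * inner (lam (c *\<^sub>R x)) (lam x)"
    using assms inner_le_inner_lam by (rule mult_left_mono[rotated])
  then show "norm (lam (c *\<^sub>R x)) * norm (c *\<^sub>R lam x) \<le> inner (lam (c *\<^sub>R x)) (c *\<^sub>R lam x)"
    using assms by (simp add: power2_norm_eq_inner[symmetric] power2_eq_square mult_ac)
qed

lemma commute_scaleR_nonneg:
  assumes "commute lam y x" and "c \<ge> 0"
  shows "commute lam (c *\<^sub>R y) x"
  using assms lam_scaleR_nonneg[of c y] unfolding commute_def by simp

lemma commute_add:
  assumes y: "commute lam y x" and z: "commute lam z x"
  shows "commute lam (y + z) x"
proof -
  obtain x' where x': "lam x' = lam x" "commute lam (y + z) x'"
    using exists_orbit_commute by blast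
  have "inner (lam (y + z)) (lam x) = inner y x' + inner z x'"
    using x' unfolding commute_def by (simp add: inner_add_left)
  also have "\<dots> \<le> inner (lam y) (lam x) + inner (lam z) (lam x)"
    using inner_le_inner_lam[of y x'] inner_le_inner_lam[of z x'] x'(1) by simp
  also have "\<dots> = inner (y + z) x"
    using y z unfolding commute_def by (simp add: inner_add_left)
  finally show ?thesis
    using inner_le_inner_lam[of "y + z" x] unfolding commute_def by simp
qed

lemma closed_commutant: "closed (commutant lam x)"
proof -
  have "commutant lam x = {y. inner y x = inner (lam y) (lam x)}"
    unfolding commutant_def commute_def ..
  moreover have "continuous_on UNIV (\<lambda>y. inner (lam y) (lam x))"
    using continuous_on_lam by (intro continuous_intros) auto
  ultimately show ?thesis
    by (simp add: closed_Collect_eq continuous_on_inner continuous_on_id)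
qed

lemma convex_cone_commutant: "convex (commutant lam x) \<and> cone (commutant lam x)"
  unfolding convex_cone commutant_def using commute_add commute_scaleR_nonneg by simp

lemma orbit_Int_commutant: "orbit lam x \<inter> commutant lam x = {x}"
proof
  show "{x} \<subseteq> orbit lam x \<inter> commutant lam x"
    unfolding orbit_def commutant_def commute_def by simp
  show "orbit lam x \<inter> commutant lam x \<subseteq> {x}"
  proof
    fix y assume "y \<in> orbit lam x \<inter> commutant lam x"
    then have lam_y: "lam y = lam x" and "inner y x = inner (lam y) (lam x)"
      unfolding orbit_def commutant_def commute_def by auto
    then have "inner y x = (norm x)\<^sup>2"
      by (simp add: power2_norm_eq_inner)
    moreover have "norm y = norm x"
      by (metis lam_y norm_lam)
    ultimately have "y = x"
      using eq_if_norm_eq_inner_ge[of y x] by (simp add: power2_eq_square)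
    then show "y \<in> {x}" by simp
  qed
qed

lemma eq_uminus_if_lam_eq_uminus:
  assumes "lam x = - lam y"
  shows "x = - y"
proof (rule eq_if_norm_eq_inner_ge)
  show "norm x = norm (- y)"
    by (metis assms norm_lam norm_minus_cancel)
  have "inner (lam y) (lam y) \<le> - inner x y"
    using assms inner_le_inner_lam[of x y] by simp
  then show "norm x * norm (- y) \<le> inner x (- y)"
    using \<open>norm x = norm (- y)\<close> by (simp add: power2_norm_eq_inner[symmetric] power2_eq_square)
qed

lemma mem_center_if_lam_eq_uminus:
  assumes "lam x = - lam y"
  shows "x \<in> center lam"
  unfolding mem_center_iff commute_def
proof
  fix z
  have x: "x = - y"
    using assms by (rule eq_uminus_if_lam_eq_uminus)
  have "inner (- y) z \<le> - inner (lam y) (lam z)"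
    using inner_le_inner_lam[of x z] assms x by simp
  then show "inner x z = inner (lam x) (lam z)"
    using inner_le_inner_lam[of y z] assms x by simp
qed

lemma lam_uminus_if_commute_uminus:
  assumes "commute lam x (- x)"
  shows "lam (- x) = - lam x"
proof (rule eq_if_norm_eq_inner_ge)
  show "norm (lam (- x)) = norm (- lam x)"
    by simp
  then show "norm (lam (- x)) * norm (- lam x) \<le> inner (lam (- x)) (- lam x)"
    using assms unfolding commute_def
    by (simp add: inner_commute power2_norm_eq_inner[symmetric] power2_eq_square)
qed

lemma center_eq_lam_uminus: "center lam = {x. lam (- x) = - lam x}"
proof (intro set_eqI iffI; simp)
  fix x
  show "x \<in> center lam \<Longrightarrow> lam (- x) = - lam x"
    by (simp add: mem_center_iff lam_uminus_if_commute_uminus)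
  show "lam (- x) = - lam x \<Longrightarrow> x \<in> center lam"
    by (rule mem_center_if_lam_eq_uminus[of x "- x"]) simp
qed

lemma center_eq_commute_uminus: "center lam = {x. commute lam x (- x)}"
proof (intro set_eqI iffI; simp)
  fix x
  show "x \<in> center lam \<Longrightarrow> commute lam x (- x)"
    by (simp add: mem_center_iff)
  show "commute lam x (- x) \<Longrightarrow> x \<in> center lam"
    using center_eq_lam_uminus lam_uminus_if_commute_uminus by blast
qed

lemma closed_center: "closed (center lam)"
  unfolding center_def using closed_commutant by blast

lemma lam_linear_on_center:
  assumes "x \<in> center lam" and "y \<in> center lam"
  shows "lam (a *\<^sub>R x + b *\<^sub>R y) = a *\<^sub>R lam x + b *\<^sub>R lam y"
proof -
  have x: "inner (lam x) (lam w) = inner x w" "inner (lam w) (lam x) = inner w x"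
    and y: "inner (lam y) (lam w) = inner y w" "inner (lam w) (lam y) = inner w y" for w
    using assms unfolding mem_center_iff commute_def by (simp_all add: inner_commute)
  define z where "z = a *\<^sub>R x + b *\<^sub>R y"
  have "inner (lam z - (a *\<^sub>R lam x + b *\<^sub>R lam y)) (lam z - (a *\<^sub>R lam x + b *\<^sub>R lam y))
      = inner (z - (a *\<^sub>R x + b *\<^sub>R y)) (z - (a *\<^sub>R x + b *\<^sub>R y))"
    by (simp add: inner_diff inner_add x y)
  then show ?thesis
    by (simp add: z_def)
qed

lemma lam_zero [simp]: "lam 0 = 0"
  using lam_scaleR_nonneg[of 0 0] by simp

lemma lincomb_mem_center:
  assumes "x \<in> center lam" and "y \<in> center lam"
  shows "a *\<^sub>R x + b *\<^sub>R y \<in> center lam"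
proof -
  have "lam (- (a *\<^sub>R x + b *\<^sub>R y)) = lam ((- a) *\<^sub>R x + (- b) *\<^sub>R y)"
    by simp
  also have "\<dots> = (- a) *\<^sub>R lam x + (- b) *\<^sub>R lam y"
    using assms by (rule lam_linear_on_center)
  also have "\<dots> = - lam (a *\<^sub>R x + b *\<^sub>R y)"
    using lam_linear_on_center[OF assms, of a b] by simp
  finally show ?thesis
    unfolding center_eq_lam_uminus by simp
qed

lemma subspace_center: "subspace (center lam)"
  unfolding subspace_def
proof (intro conjI ballI allI)
  show "0 \<in> center lam"
    by (simp add: center_eq_lam_uminus)
  show "x + y \<in> center lam" if "x \<in> center lam" "y \<in> center lam" for x y
    using lincomb_mem_center[OF that, of 1 1] by simp
  show "c *\<^sub>R x \<in> center lam" if "x \<in> center lam" for c x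
    using lincomb_mem_center[OF that that, of c 0] by simp
qed

end

theorem proposition6p2:
  fixes lam :: "'v::real_inner \<Rightarrow> 'w::real_inner"
  assumes "ftvn lam"
  shows "(\<forall>x. closed (commutant lam x) \<and> convex (commutant lam x) \<and> cone (commutant lam x)
              \<and> orbit lam x \<inter> commutant lam x = {x})
     \<and> (\<forall>x y. lam x = - lam y \<longrightarrow> x = - y \<and> x \<in> center lam \<and> y \<in> center lam)
     \<and> (closed (center lam) \<and> subspace (center lam)
        \<and> (\<forall>x\<in>center lam. \<forall>y\<in>center lam. \<forall>a b::real.
              lam (a *\<^sub>R x + b *\<^sub>R y) = a *\<^sub>R lam x + b *\<^sub>R lam y))
     \<and> center lam = {x. lam (- x) = - lam x}
     \<and> (\<forall>x. commute lam x (- x) \<longrightarrow> x \<in> center lam)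
     \<and> center lam = {x. commute lam x (- x)}"
proof -
  interpret ftvn_system lam
    by (rule ftvn_system.intro) (rule assms)
  have a: "\<forall>x. closed (commutant lam x) \<and> convex (commutant lam x) \<and> cone (commutant lam x)
              \<and> orbit lam x \<inter> commutant lam x = {x}"
    using closed_commutant convex_cone_commutant orbit_Int_commutant by simp
  have b: "\<forall>x y. lam x = - lam y \<longrightarrow> x = - y \<and> x \<in> center lam \<and> y \<in> center lam"
  proof (intro allI impI conjI)
    fix x y
    assume xy: "lam x = - lam y"
    then show "x = - y" and "x \<in> center lam"
      by (rule eq_uminus_if_lam_eq_uminus, rule mem_center_if_lam_eq_uminus)
    from xy have "lam y = - lam x" by simp
    then show "y \<in> center lam"
      by (rule mem_center_if_lam_eq_uminus)
  qed
  have c: "\<forall>x\<in>center lam. \<forall>y\<in>center lam. \<forall>a b::real.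
              lam (a *\<^sub>R x + b *\<^sub>R y) = a *\<^sub>R lam x + b *\<^sub>R lam y"
    by (simp add: lam_linear_on_center)
  have e: "\<forall>x. commute lam x (- x) \<longrightarrow> x \<in> center lam"
    by (simp add: center_eq_commute_uminus)
  show ?thesis
    by (intro conjI)
      (rule a b c e closed_center subspace_center center_eq_lam_uminus center_eq_commute_uminus)+
qed

end
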